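(* Let $f\in\Gamma_0(\mathcal H)$ be $\nu$-strongly convex ($\nu>0$), and let $h:\mathcal H\to\mathbb R$ be convex and differentiable with $\mu$-Lipschitz gradient, of the form $h(x)=\mathsf E_\xi[H(x,\xi)]$, where $\xi$ is a random vector with distribution supported on $\Omega_P\subset\mathbb R^m$ and $H(\cdot,\xi)$ is convex. Assume $\operatorname{zer}(\partial f+\nabla h)\neq\varnothing$, that i.i.d. samples $(\xi_n)_{n\in\mathbb N}$ of $\xi$ are available, and that for every $(x,\xi)$ one can compute $\nabla H(x,\xi)$ with $\mathsf E[\nabla H(x,\xi)]=\nabla h(x)$. Let $x_0,x_{-1}\in\mathcal H$, $\gamma_n=\frac1{2\nu(n+1)}$, and for $n\in\mathbb N$: $$y_n=2x_n-x_{n-1},\qquad x_{n+1}=\operatorname{prox}_{\gamma_nf}\big(x_n-\gamma_n\nabla H(y_n,\xi_n)\big).$$ Suppose there is a constant $c$ with $\mathsf E[\|\nabla H(y_n,\xi_n)-\nabla h(y_n)\|^2\mid\xi_0,\dots,\xi_{n-1}]\le c$ for all $n$. Then $$\mathsf E\big[\|x_n-\bar x\|^2\big]=\mathcal O\big(\log(n+1)/(n+1)\big)\quad(n>n_0),$$ where $n_0$ is the smallest integer with $n_0>2\nu^{-1}\mu(1+\sqrt2)$ and $\bar x$ is the unique minimizer of $f+h$.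
   Context: $\mathcal H$ is a separable real Hilbert space. $\Gamma_0(\mathcal H)$ is the class of proper lower semicontinuous convex functions $\mathcal H\to]-\infty,+\infty]$. $\operatorname{prox}_f(x)=\operatorname{argmin}_y\big(f(y)+\tfrac12\|x-y\|^2\big)$. $f$ is $\nu$-strongly convex means $\partial f$ is $\nu$-strongly monotone: $\langle x-y,u-v\rangle\ge\nu\|x-y\|^2$ for all $u\in\partial f(x)$, $v\in\partial f(y)$. *)

theory Defs
  imports "HOL-Probability.Probability"
begin

definition proper_fun :: "('a \<Rightarrow> ereal) \<Rightarrow> bool" where
  "proper_fun f \<longleftrightarrow> (\<exists>x. f x < \<infinity>) \<and> (\<forall>x. f x > -\<infinity>)"

definition lsc_fun :: "('a::topological_space \<Rightarrow> ereal) \<Rightarrow> bool" where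
  "lsc_fun f \<longleftrightarrow> (\<forall>c. closed {x. f x \<le> c})"

definition convex_fun :: "('a::real_vector \<Rightarrow> ereal) \<Rightarrow> bool" where
  "convex_fun f \<longleftrightarrow> (\<forall>x y (t::real). 0 \<le> t \<and> t \<le> 1 \<longrightarrow>
      f ((1 - t) *\<^sub>R x + t *\<^sub>R y) \<le> ereal (1 - t) * f x + ereal t * f y)"

definition Gamma0 :: "('a::real_normed_vector \<Rightarrow> ereal) set" where
  "Gamma0 = {f. proper_fun f \<and> lsc_fun f \<and> convex_fun f}"

definition subdiff :: "('a::real_inner \<Rightarrow> ereal) \<Rightarrow> 'a \<Rightarrow> 'a set" where
  "subdiff f x = {u. f x < \<infinity> \<and> (\<forall>y. f x + ereal (inner u (y - x)) \<le> f y)}"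

definition strongly_convex :: "real \<Rightarrow> ('a::real_inner \<Rightarrow> ereal) \<Rightarrow> bool" where
  "strongly_convex \<nu> f \<longleftrightarrow> (\<forall>x y u v. u \<in> subdiff f x \<longrightarrow> v \<in> subdiff f y \<longrightarrow>
      inner (x - y) (u - v) \<ge> \<nu> * (norm (x - y))\<^sup>2)"

definition prox :: "('a::real_normed_vector \<Rightarrow> ereal) \<Rightarrow> 'a \<Rightarrow> 'a" where
  "prox f x = (THE p. \<forall>y. f p + ereal ((norm (x - p))\<^sup>2 / 2) \<le> f y + ereal ((norm (x - y))\<^sup>2 / 2))"

definition step :: "real \<Rightarrow> nat \<Rightarrow> real" where
  "step \<nu> n = 1 / (2 * \<nu> * (real n + 1))"

text \<open>State (x_n, x_(n-1)) of the iteration, driven by a sample path z_n = xi_n(omega);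
  G x z stands for the stochastic gradient nabla H(x, z).\<close>
primrec fbf_state :: "('a::real_normed_vector \<Rightarrow> ereal) \<Rightarrow> ('a \<Rightarrow> 'b \<Rightarrow> 'a) \<Rightarrow> real
    \<Rightarrow> 'a \<Rightarrow> 'a \<Rightarrow> (nat \<Rightarrow> 'b) \<Rightarrow> nat \<Rightarrow> 'a \<times> 'a" where
  "fbf_state f G \<nu> x0 xm1 z 0 = (x0, xm1)"
| "fbf_state f G \<nu> x0 xm1 z (Suc n) =
     (let xn = fst (fbf_state f G \<nu> x0 xm1 z n);
          xp = snd (fbf_state f G \<nu> x0 xm1 z n);
          yn = 2 *\<^sub>R xn - xp
      in (prox (\<lambda>u. ereal (step \<nu> n) * f u) (xn - step \<nu> n *\<^sub>R G yn (z n)), xn))"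

definition fbf_x where
  "fbf_x f G \<nu> x0 xm1 z n = fst (fbf_state f G \<nu> x0 xm1 z n)"

definition fbf_y where
  "fbf_y f G \<nu> x0 xm1 z n =
     2 *\<^sub>R fst (fbf_state f G \<nu> x0 xm1 z n) - snd (fbf_state f G \<nu> x0 xm1 z n)"

definition gen_sigma :: "'w measure \<Rightarrow> (nat \<Rightarrow> 'w \<Rightarrow> 'b::topological_space) \<Rightarrow> nat \<Rightarrow> 'w measure" where
  "gen_sigma M \<xi> n = sigma (space M) {\<xi> i -` A \<inter> space M | i A. i < n \<and> A \<in> sets borel}"

end

theory Submission
  imports Defs
begin

(* Along a sample path, the energy V_n = ||x_n - xbar||^2 + ||x_n - x_(n-1)||^2 / 4 obeys a one-step
   inequality: strong monotonicity of the subdifferential of f compares x_(n+1) with the fixed point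
   xbar, the Lipschitz gradient controls the reflected point y_n = 2 x_n - x_(n-1), and nonexpansiveness
   of the prox moves the noise onto the noise-free step, which depends on xi_0, ..., xi_(n-1) only.
   By independence that cross term has mean zero, so for gamma_n = 1/(2 nu (n+1)) the expectations
   satisfy (1 + 1/(n+1) - K/(n+1)^2) E V_(n+1) <= E V_n + e/(n+1)^2.  Weighted by n + 1 + 2K this
   recursion telescopes up to a harmonic sum, whence E V_n = O(log(n+1)/(n+1)). *)

section \<open>Differentiable convex functions\<close>

lemma has_derivative_difference_quotient_at_right:
  fixes g :: "'a::real_inner \<Rightarrow> real"
  assumes "(g has_derivative (\<lambda>v. inner d v)) (at z)"
  shows "((\<lambda>t. (g (z + t *\<^sub>R w) - g z) / t) \<longlongrightarrow> inner d w) (at_right 0)"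
proof -
  have "((\<lambda>t. z + t *\<^sub>R w) has_derivative (\<lambda>t. t *\<^sub>R w)) (at 0)"
    by (auto intro!: derivative_eq_intros)
  from has_derivative_compose[OF this, of g "\<lambda>v. inner d v"] assms
  have "((\<lambda>t. g (z + t *\<^sub>R w)) has_derivative (\<lambda>t. inner d (t *\<^sub>R w))) (at 0)"
    by simp
  moreover have "(\<lambda>t. inner d (t *\<^sub>R w)) = (*) (inner d w)"
    by (auto simp: fun_eq_iff)
  ultimately have "((\<lambda>t. g (z + t *\<^sub>R w)) has_field_derivative inner d w) (at 0)"
    unfolding has_field_derivative_def by simp
  then have "((\<lambda>t. (g (z + t *\<^sub>R w) - g z) / t) \<longlongrightarrow> inner d w) (at 0)"
    unfolding has_field_derivative_iff by simp
  then show ?thesis by (rule tendsto_mono[OF at_le, rotated]) simp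
qed

lemma tendsto_at_right_0_le:
  fixes q :: "real \<Rightarrow> real"
  assumes "(q \<longlongrightarrow> L) (at_right 0)" "\<And>t. 0 < t \<Longrightarrow> t < 1 \<Longrightarrow> q t \<le> c"
  shows "L \<le> c"
  by (rule tendsto_upperbound[OF assms(1) eventually_mono[OF eventually_at_right_real[of 0 1]]])
    (use assms(2) in auto)

lemma tendsto_at_right_0_ge:
  fixes q :: "real \<Rightarrow> real"
  assumes "(q \<longlongrightarrow> L) (at_right 0)" "\<And>t. 0 < t \<Longrightarrow> t < 1 \<Longrightarrow> c \<le> q t"
  shows "c \<le> L"
  by (rule tendsto_lowerbound[OF assms(1) eventually_mono[OF eventually_at_right_real[of 0 1]]])
    (use assms(2) in auto)

lemma convex_on_gradient_ineq:
  fixes h :: "'a::real_inner \<Rightarrow> real"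
  assumes "convex_on UNIV h" and "(h has_derivative (\<lambda>v. inner g v)) (at x)"
  shows "h x + inner g (y - x) \<le> h y"
proof -
  have "inner g (y - x) \<le> h y - h x"
  proof (rule tendsto_at_right_0_le[OF has_derivative_difference_quotient_at_right[OF assms(2)]])
    fix t :: real assume t: "0 < t" "t < 1"
    have "h ((1 - t) *\<^sub>R x + t *\<^sub>R y) \<le> (1 - t) * h x + t * h y"
      using convex_onD[OF assms(1), of t x y] t by auto
    moreover have "(1 - t) *\<^sub>R x + t *\<^sub>R y = x + t *\<^sub>R (y - x)" by (simp add: algebra_simps)
    ultimately have "h (x + t *\<^sub>R (y - x)) - h x \<le> t * (h y - h x)" by (simp add: algebra_simps)
    then show "(h (x + t *\<^sub>R (y - x)) - h x) / t \<le> h y - h x"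
      using t by (simp add: divide_simps mult.commute)
  qed
  then show ?thesis by simp
qed

lemma convex_on_gradient_monotone:
  fixes h :: "'a::real_inner \<Rightarrow> real"
  assumes "convex_on UNIV h" and "\<And>x. (h has_derivative (\<lambda>v. inner (gh x) v)) (at x)"
  shows "0 \<le> inner (gh x - gh y) (x - y)"
  using convex_on_gradient_ineq[OF assms(1) assms(2), of x y]
    convex_on_gradient_ineq[OF assms(1) assms(2), of y x]
  by (simp add: inner_diff_left inner_diff_right)

section \<open>Proximal points\<close>

lemma power2_norm_diff: "(norm (a - b))\<^sup>2 = (norm a)\<^sup>2 - 2 * inner a b + (norm (b::'a::real_inner))\<^sup>2"
  by (simp add: power2_norm_eq_inner inner_diff_left inner_diff_right inner_commute)

lemma power2_norm_add: "(norm (a + b))\<^sup>2 = (norm a)\<^sup>2 + 2 * inner a b + (norm (b::'a::real_inner))\<^sup>2"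
  by (simp add: power2_norm_eq_inner inner_add_left inner_add_right inner_commute)

lemma power2_norm_midpoint:
  fixes u v :: "'a::real_inner"
  shows "(norm (midpoint u v))\<^sup>2 = (norm u)\<^sup>2 / 2 + (norm v)\<^sup>2 / 2 - (norm (u - v))\<^sup>2 / 4"
  by (simp add: midpoint_def power2_norm_eq_inner inner_add_left inner_add_right
      inner_diff_left inner_diff_right inner_commute field_simps)

lemma minimizing_sequence_Cauchy:
  fixes a :: "nat \<Rightarrow> 'a::real_normed_vector" and \<phi> :: "'a \<Rightarrow> real"
  assumes below: "\<And>k. \<phi> (a k) < m + inverse (real (Suc k))"
    and gap: "\<And>j k. (norm (a j - a k))\<^sup>2 \<le> 4 * (\<phi> (a j) + \<phi> (a k) - 2 * m)"
  shows "Cauchy a"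
  unfolding Cauchy_def
proof (intro allI impI)
  fix e :: real assume e: "0 < e"
  obtain K :: nat where K: "inverse (real (Suc K)) < e\<^sup>2 / 8"
    using reals_Archimedean[of "e\<^sup>2/8"] e by auto
  show "\<exists>N. \<forall>j\<ge>N. \<forall>k\<ge>N. dist (a j) (a k) < e"
  proof (intro exI allI impI)
    fix j k assume jk: "K \<le> j" "K \<le> k"
    have "(norm (a j - a k))\<^sup>2 < 4 * (inverse (real (Suc j)) + inverse (real (Suc k)))"
      using gap[of j k] below[of j] below[of k] by simp
    also have "\<dots> \<le> 4 * (inverse (real (Suc K)) + inverse (real (Suc K)))"
      using jk by (intro mult_left_mono add_mono le_imp_inverse_le) auto
    also have "\<dots> < e\<^sup>2" using K by simp
    finally show "dist (a j) (a k) < e"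
      using e by (simp add: dist_norm power_less_imp_less_base)
  qed
qed

locale strongly_convex_Gamma0 =
  fixes f :: "'a::{real_inner, complete_space} \<Rightarrow> ereal" and \<nu> :: real
  assumes Gamma0: "f \<in> Gamma0" and nu_pos: "\<nu> > 0" and strongly_convex: "strongly_convex \<nu> f"
    \<comment> \<open>an affine minorant of f; it keeps the prox objective bounded below\<close>
    and subdiff_nonempty: "\<exists>x u. u \<in> subdiff f x"
begin

abbreviation F :: "'a \<Rightarrow> real" where "F x \<equiv> real_of_ereal (f x)"

lemma finite_valueE:
  assumes "f x < \<infinity>" obtains r where "f x = ereal r"
  using assms Gamma0 by (cases "f x") (auto simp: Gamma0_def proper_fun_def)

lemma dom_convex_combination:
  assumes "f x < \<infinity>" "f y < \<infinity>" "0 \<le> t" "t \<le> 1"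
  shows "f ((1 - t) *\<^sub>R x + t *\<^sub>R y) < \<infinity>" and "F ((1 - t) *\<^sub>R x + t *\<^sub>R y) \<le> (1 - t) * F x + t * F y"
proof -
  obtain a b where ab: "f x = ereal a" "f y = ereal b"
    using finite_valueE[OF assms(1)] finite_valueE[OF assms(2)] by metis
  have "f ((1 - t) *\<^sub>R x + t *\<^sub>R y) \<le> ereal (1 - t) * f x + ereal t * f y"
    using Gamma0 assms(3,4) by (auto simp: Gamma0_def convex_fun_def)
  then have le: "f ((1 - t) *\<^sub>R x + t *\<^sub>R y) \<le> ereal ((1 - t) * a + t * b)" by (simp add: ab)
  then show fin: "f ((1 - t) *\<^sub>R x + t *\<^sub>R y) < \<infinity>" by (rule le_less_trans) simp
  show "F ((1 - t) *\<^sub>R x + t *\<^sub>R y) \<le> (1 - t) * F x + t * F y"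
    using le fin by (elim finite_valueE) (simp add: ab)
qed

lemma subdiff_dom: "u \<in> subdiff f x \<Longrightarrow> f x < \<infinity>"
  by (simp add: subdiff_def)

lemma subdiff_ineq:
  assumes "u \<in> subdiff f x" "f y < \<infinity>"
  shows "F x + inner u (y - x) \<le> F y"
proof -
  obtain a b where ab: "f x = ereal a" "f y = ereal b"
    using finite_valueE[OF subdiff_dom[OF assms(1)]] finite_valueE[OF assms(2)] by metis
  have "f x + ereal (inner u (y - x)) \<le> f y" using assms(1) by (auto simp: subdiff_def)
  then show ?thesis by (simp add: ab)
qed

lemma subdiffI:
  assumes "f x < \<infinity>" "\<And>y. f y < \<infinity> \<Longrightarrow> F x + inner u (y - x) \<le> F y"
  shows "u \<in> subdiff f x"
  unfolding subdiff_def
proof (intro CollectI conjI allI assms(1))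
  fix y show "f x + ereal (inner u (y - x)) \<le> f y"
  proof (cases "f y < \<infinity>")
    case True
    obtain a b where "f x = ereal a" "f y = ereal b"
      using finite_valueE[OF assms(1)] finite_valueE[OF True] by metis
    then show ?thesis using assms(2)[OF True] by simp
  qed (simp add: top.not_eq_extremum)
qed

lemma subdiff_strongly_monotone:
  "u \<in> subdiff f x \<Longrightarrow> v \<in> subdiff f y \<Longrightarrow> \<nu> * (norm (x - y))\<^sup>2 \<le> inner (x - y) (u - v)"
  using strongly_convex by (auto simp: strongly_convex_def)

lemma subdiff_monotone:
  "u \<in> subdiff f x \<Longrightarrow> v \<in> subdiff f y \<Longrightarrow> 0 \<le> inner (x - y) (u - v)"
  using subdiff_strongly_monotone[of u x v y] nu_pos
  by (meson mult_nonneg_nonneg order_trans less_imp_le zero_le_power2)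

definition is_prox :: "real \<Rightarrow> 'a \<Rightarrow> 'a \<Rightarrow> bool" where
  "is_prox \<gamma> z p \<longleftrightarrow> (\<forall>y. ereal \<gamma> * f p + ereal ((norm (z - p))\<^sup>2 / 2)
                          \<le> ereal \<gamma> * f y + ereal ((norm (z - y))\<^sup>2 / 2))"

definition prox_objective :: "real \<Rightarrow> 'a \<Rightarrow> 'a \<Rightarrow> real" where
  "prox_objective \<gamma> z y = \<gamma> * F y + (norm (z - y))\<^sup>2 / 2"

lemma is_prox_dom:
  assumes "is_prox \<gamma> z p" "\<gamma> > 0"
  shows "f p < \<infinity>"
proof (rule ccontr)
  obtain x u where "u \<in> subdiff f x" using subdiff_nonempty by auto
  then obtain a where a: "f x = ereal a" using subdiff_dom finite_valueE by blast
  assume "\<not> f p < \<infinity>"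
  then have "f p = \<infinity>" by (simp add: top.not_eq_extremum)
  moreover have "ereal \<gamma> * f p + ereal ((norm (z - p))\<^sup>2 / 2) \<le> ereal \<gamma> * f x + ereal ((norm (z - x))\<^sup>2 / 2)"
    using assms(1) unfolding is_prox_def by blast
  ultimately show False using assms(2) by (simp add: a)
qed

lemma is_prox_le:
  assumes "is_prox \<gamma> z p" "\<gamma> > 0" "f y < \<infinity>"
  shows "prox_objective \<gamma> z p \<le> prox_objective \<gamma> z y"
proof -
  obtain a b where "f p = ereal a" "f y = ereal b"
    using finite_valueE[OF is_prox_dom[OF assms(1,2)]] finite_valueE[OF assms(3)] by metis
  then show ?thesis using assms(1) unfolding is_prox_def prox_objective_def by (auto dest: spec[of _ y])
qed

lemma is_proxI:
  assumes "\<gamma> > 0" "f p < \<infinity>" "\<And>y. f y < \<infinity> \<Longrightarrow> prox_objective \<gamma> z p \<le> prox_objective \<gamma> z y"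
  shows "is_prox \<gamma> z p"
  unfolding is_prox_def
proof
  fix y show "ereal \<gamma> * f p + ereal ((norm (z - p))\<^sup>2 / 2) \<le> ereal \<gamma> * f y + ereal ((norm (z - y))\<^sup>2 / 2)"
  proof (cases "f y < \<infinity>")
    case True
    obtain a b where "f p = ereal a" "f y = ereal b"
      using finite_valueE[OF assms(2)] finite_valueE[OF True] by metis
    then show ?thesis using assms(3)[OF True] unfolding prox_objective_def by simp
  qed (use assms(1) in \<open>simp add: top.not_eq_extremum\<close>)
qed

lemma is_prox_subdiff:
  assumes p: "is_prox \<gamma> z p" and g: "\<gamma> > 0"
  shows "(1 / \<gamma>) *\<^sub>R (z - p) \<in> subdiff f p"
proof (rule subdiffI[OF is_prox_dom[OF p g]])
  fix y assume fy: "f y < \<infinity>"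
  have fp: "f p < \<infinity>" by (rule is_prox_dom[OF p g])
  have "\<gamma> * F p + inner (z - p) (y - p) \<le> \<gamma> * F y"
  proof (rule tendsto_at_right_0_le)
    show "((\<lambda>t. \<gamma> * F p + inner (z - p) (y - p) - t / 2 * (norm (y - p))\<^sup>2)
            \<longlongrightarrow> \<gamma> * F p + inner (z - p) (y - p)) (at_right 0)"
      by (auto intro!: tendsto_eq_intros)
    fix t :: real assume t: "0 < t" "t < 1"
    let ?yt = "(1 - t) *\<^sub>R p + t *\<^sub>R y"
    have e: "z - ?yt = (z - p) - t *\<^sub>R (y - p)" by (simp add: algebra_simps)
    have "prox_objective \<gamma> z p \<le> prox_objective \<gamma> z ?yt"
      using dom_convex_combination(1)[OF fp fy, of t] t by (intro is_prox_le[OF p g]) auto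
    moreover have "(norm (z - ?yt))\<^sup>2 = (norm (z - p))\<^sup>2 - 2 * t * inner (z - p) (y - p) + t\<^sup>2 * (norm (y - p))\<^sup>2"
      unfolding e power2_norm_diff[of "z - p" "t *\<^sub>R (y - p)"] by (simp add: power_mult_distrib)
    moreover have "\<gamma> * F ?yt \<le> \<gamma> * ((1 - t) * F p + t * F y)"
      using dom_convex_combination(2)[OF fp fy, of t] t g by simp
    ultimately have "t * (\<gamma> * F p + inner (z - p) (y - p) - t / 2 * (norm (y - p))\<^sup>2) \<le> t * (\<gamma> * F y)"
      by (simp add: prox_objective_def algebra_simps power2_eq_square)
    then show "\<gamma> * F p + inner (z - p) (y - p) - t / 2 * (norm (y - p))\<^sup>2 \<le> \<gamma> * F y"
      using t by simp
  qed
  then show "F p + inner ((1 / \<gamma>) *\<^sub>R (z - p)) (y - p) \<le> F y"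
    using g unfolding inner_scaleR_left by (simp add: field_simps)
qed

lemma subdiff_is_prox:
  assumes s: "(1 / \<gamma>) *\<^sub>R (z - p) \<in> subdiff f p" and g: "\<gamma> > 0"
  shows "is_prox \<gamma> z p"
proof (rule is_proxI[OF g subdiff_dom[OF s]])
  fix y assume fy: "f y < \<infinity>"
  have "\<gamma> * (F p + inner ((1 / \<gamma>) *\<^sub>R (z - p)) (y - p)) \<le> \<gamma> * F y"
    using subdiff_ineq[OF s fy] g by simp
  then have "\<gamma> * F p + inner (z - p) (y - p) \<le> \<gamma> * F y"
    using g by (simp add: distrib_left)
  moreover have "(norm (z - y))\<^sup>2 = (norm (z - p))\<^sup>2 - 2 * inner (z - p) (y - p) + (norm (y - p))\<^sup>2"
    using power2_norm_diff[of "z - p" "y - p"] by simp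
  moreover have "0 \<le> (norm (y - p))\<^sup>2" by simp
  ultimately show "prox_objective \<gamma> z p \<le> prox_objective \<gamma> z y"
    unfolding prox_objective_def by linarith
qed

lemma is_prox_unique:
  assumes "is_prox \<gamma> z p" "is_prox \<gamma> z q" "\<gamma> > 0"
  shows "p = q"
proof -
  have "0 \<le> inner (p - q) ((1 / \<gamma>) *\<^sub>R (z - p) - (1 / \<gamma>) *\<^sub>R (z - q))"
    by (rule subdiff_monotone[OF is_prox_subdiff[OF assms(1,3)] is_prox_subdiff[OF assms(2,3)]])
  also have "(1 / \<gamma>) *\<^sub>R (z - p) - (1 / \<gamma>) *\<^sub>R (z - q) = - (1 / \<gamma>) *\<^sub>R (p - q)"
    by (simp add: algebra_simps)
  also have "inner (p - q) \<dots> = - (norm (p - q))\<^sup>2 / \<gamma>"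
    by (simp add: power2_norm_eq_inner)
  finally show ?thesis using assms(3) by (simp add: divide_le_0_iff)
qed

lemma prox_objective_bdd_below:
  assumes g: "\<gamma> > 0"
  shows "bdd_below (prox_objective \<gamma> z ` {y. f y < \<infinity>})"
proof -
  obtain x0 u where sd: "u \<in> subdiff f x0" using subdiff_nonempty by auto
  have "\<gamma> * F x0 - \<gamma> * norm u * norm (z - x0) - (\<gamma> * norm u)\<^sup>2 / 2 \<le> prox_objective \<gamma> z y"
    if fy: "f y < \<infinity>" for y
  proof -
    have "- (norm u * norm (y - x0)) \<le> inner u (y - x0)"
      using Cauchy_Schwarz_ineq2[of u "y - x0"] by linarith
    moreover have "norm (y - x0) \<le> norm (z - y) + norm (z - x0)"
      using norm_triangle_ineq4[of "z - x0" "z - y"] by (simp add: norm_minus_commute)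
    ultimately have "F x0 - norm u * (norm (z - y) + norm (z - x0)) \<le> F y"
      using subdiff_ineq[OF sd fy] mult_left_mono[of _ _ "norm u"] by (smt (verit) norm_ge_zero)
    then have "\<gamma> * (F x0 - norm u * (norm (z - y) + norm (z - x0))) \<le> \<gamma> * F y"
      using g by simp
    moreover have "0 \<le> (norm (z - y) - \<gamma> * norm u)\<^sup>2 / 2" by simp
    ultimately show ?thesis unfolding prox_objective_def by (simp add: power2_diff algebra_simps)
  qed
  then show ?thesis by (auto intro!: bdd_belowI)
qed

lemma prox_objective_midpoint:
  assumes g: "\<gamma> > 0" and fb: "f b < \<infinity>" and fc: "f c < \<infinity>"
  shows "f (midpoint b c) < \<infinity>"
    and "(norm (b - c))\<^sup>2 / 4 + 2 * prox_objective \<gamma> z (midpoint b c)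
           \<le> prox_objective \<gamma> z b + prox_objective \<gamma> z c"
proof -
  have mid: "midpoint b c = (1 - 1/2) *\<^sub>R b + (1/2) *\<^sub>R c"
    by (simp add: midpoint_def scaleR_add_right)
  show "f (midpoint b c) < \<infinity>" unfolding mid by (rule dom_convex_combination(1)[OF fb fc]) auto
  have "\<gamma> * F (midpoint b c) \<le> \<gamma> * ((1 - 1/2) * F b + (1/2) * F c)"
    unfolding mid using dom_convex_combination(2)[OF fb fc, of "1/2"] g by simp
  moreover have "z - midpoint b c = midpoint (z - b) (z - c)"
    by (simp add: midpoint_def algebra_simps) (simp add: scaleR_2[symmetric])
  then have "(norm (z - midpoint b c))\<^sup>2 = (norm (z - b))\<^sup>2 / 2 + (norm (z - c))\<^sup>2 / 2 - (norm (b - c))\<^sup>2 / 4"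
    by (simp add: power2_norm_midpoint norm_minus_commute)
  ultimately show "(norm (b - c))\<^sup>2 / 4 + 2 * prox_objective \<gamma> z (midpoint b c)
           \<le> prox_objective \<gamma> z b + prox_objective \<gamma> z c"
    unfolding prox_objective_def by (simp add: algebra_simps)
qed

lemma lsc_sequentially:
  assumes "a \<longlonglongrightarrow> p" and "\<forall>\<^sub>F k in sequentially. f (a k) \<le> ereal c"
  shows "f p \<le> ereal c"
proof -
  have "closed {x. f x \<le> ereal c}" using Gamma0 by (auto simp: Gamma0_def lsc_fun_def)
  from Lim_in_closed_set[OF this _ _ assms(1)] assms(2) show ?thesis by simp
qed

lemma is_prox_of_minimizing_limit:
  assumes g: "\<gamma> > 0" and a_dom: "\<And>k. f (a k) < \<infinity>" and lim: "a \<longlonglongrightarrow> p"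
    and m_le: "\<And>y. f y < \<infinity> \<Longrightarrow> m \<le> prox_objective \<gamma> z y"
    and a_min: "(\<lambda>k. prox_objective \<gamma> z (a k)) \<longlonglongrightarrow> m"
  shows "is_prox \<gamma> z p"
proof -
  let ?c = "(m - (norm (z - p))\<^sup>2 / 2) / \<gamma>"
  have "(\<lambda>k. (prox_objective \<gamma> z (a k) - (norm (z - a k))\<^sup>2 / 2) / \<gamma>) \<longlonglongrightarrow> ?c"
    using g by (intro tendsto_intros lim a_min) simp_all
  moreover have "(\<lambda>k. (prox_objective \<gamma> z (a k) - (norm (z - a k))\<^sup>2 / 2) / \<gamma>) = (\<lambda>k. F (a k))"
    using g by (simp add: prox_objective_def fun_eq_iff)
  ultimately have F_lim: "(\<lambda>k. F (a k)) \<longlonglongrightarrow> ?c" by simp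
  have fp_le: "f p \<le> ereal c" if "?c < c" for c
  proof (rule lsc_sequentially[OF lim])
    show "\<forall>\<^sub>F k in sequentially. f (a k) \<le> ereal c"
      using order_tendstoD(2)[OF F_lim that]
    proof eventually_elim
      case (elim k)
      obtain r where "f (a k) = ereal r" using finite_valueE[OF a_dom[of k]] .
      with elim show ?case by simp
    qed
  qed
  have "f p \<le> ereal (?c + 1)" by (rule fp_le) simp
  then have fp: "f p < \<infinity>" by (rule le_less_trans) simp
  obtain r where r: "f p = ereal r" using finite_valueE[OF fp] .
  have "F p \<le> ?c" by (rule dense_ge) (use fp_le r in auto)
  then have "prox_objective \<gamma> z p \<le> m" using g by (simp add: prox_objective_def field_simps)
  then show ?thesis using m_le by (intro is_proxI[OF g fp]) (meson order_trans)
qed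

(* No compactness is available: the prox objective is 1-strongly convex, so a minimizing sequence is
   Cauchy by the midpoint inequality, and lower semicontinuity carries the infimum to its limit. *)
lemma is_prox_exists:
  assumes g: "\<gamma> > 0"
  shows "\<exists>p. is_prox \<gamma> z p"
proof -
  let ?\<phi> = "prox_objective \<gamma> z"
  define m where "m = Inf (?\<phi> ` {y. f y < \<infinity>})"
  have ne: "?\<phi> ` {y. f y < \<infinity>} \<noteq> {}" using subdiff_nonempty subdiff_dom by blast
  have m_le: "m \<le> ?\<phi> y" if "f y < \<infinity>" for y
    unfolding m_def using that prox_objective_bdd_below[OF g] by (intro cInf_lower) auto
  have "\<exists>y. f y < \<infinity> \<and> ?\<phi> y < m + inverse (real (Suc k))" for k
    using cInf_lessD[OF ne, of "m + inverse (real (Suc k))"] by (auto simp: m_def)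
  then obtain a where a_dom: "\<And>k. f (a k) < \<infinity>"
    and a_below: "\<And>k. ?\<phi> (a k) < m + inverse (real (Suc k))"
    by metis
  have "Cauchy a"
  proof (rule minimizing_sequence_Cauchy[where \<phi> = ?\<phi>, OF a_below])
    fix j k
    show "(norm (a j - a k))\<^sup>2 \<le> 4 * (?\<phi> (a j) + ?\<phi> (a k) - 2 * m)"
      using prox_objective_midpoint(2)[OF g a_dom[of j] a_dom[of k], of z]
        m_le[OF prox_objective_midpoint(1)[OF g a_dom[of j] a_dom[of k]]] by argo
  qed
  then obtain p where lim: "a \<longlonglongrightarrow> p" using Cauchy_convergent_iff convergent_def by blast
  have "(\<lambda>k. ?\<phi> (a k)) \<longlonglongrightarrow> m"
    by (rule tendsto_sandwich[OF _ _ tendsto_const LIMSEQ_inverse_real_of_nat_add])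
      (use a_below[THEN less_imp_le] in \<open>auto intro!: always_eventually m_le a_dom\<close>)
  then show ?thesis using is_prox_of_minimizing_limit[OF g a_dom lim m_le] by blast
qed

lemma prox_is_prox:
  assumes "\<gamma> > 0"
  shows "is_prox \<gamma> z (prox (\<lambda>u. ereal \<gamma> * f u) z)"
proof -
  obtain p where p: "is_prox \<gamma> z p" using is_prox_exists[OF assms] ..
  have "prox (\<lambda>u. ereal \<gamma> * f u) z = p"
    unfolding prox_def
  proof (rule the_equality)
    show "\<forall>y. ereal \<gamma> * f p + ereal ((norm (z - p))\<^sup>2 / 2) \<le> ereal \<gamma> * f y + ereal ((norm (z - y))\<^sup>2 / 2)"
      using p unfolding is_prox_def .
  qed (use is_prox_unique[OF _ p assms] in \<open>auto simp: is_prox_def\<close>)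
  with p show ?thesis by simp
qed

lemma prox_subdiff:
  "\<gamma> > 0 \<Longrightarrow> (1 / \<gamma>) *\<^sub>R (z - prox (\<lambda>u. ereal \<gamma> * f u) z) \<in> subdiff f (prox (\<lambda>u. ereal \<gamma> * f u) z)"
  by (rule is_prox_subdiff[OF prox_is_prox])

lemma prox_eqI:
  "\<gamma> > 0 \<Longrightarrow> (1 / \<gamma>) *\<^sub>R (z - p) \<in> subdiff f p \<Longrightarrow> prox (\<lambda>u. ereal \<gamma> * f u) z = p"
  by (rule is_prox_unique[OF prox_is_prox subdiff_is_prox])

lemma prox_nonexpansive:
  assumes g: "\<gamma> > 0"
  shows "norm (prox (\<lambda>u. ereal \<gamma> * f u) z - prox (\<lambda>u. ereal \<gamma> * f u) z') \<le> norm (z - z')"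
proof -
  let ?p = "prox (\<lambda>u. ereal \<gamma> * f u) z" and ?q = "prox (\<lambda>u. ereal \<gamma> * f u) z'"
  have "0 \<le> inner (?p - ?q) ((1 / \<gamma>) *\<^sub>R (z - ?p) - (1 / \<gamma>) *\<^sub>R (z' - ?q))"
    by (rule subdiff_monotone[OF prox_subdiff[OF g] prox_subdiff[OF g]])
  also have "(1 / \<gamma>) *\<^sub>R (z - ?p) - (1 / \<gamma>) *\<^sub>R (z' - ?q) = (1 / \<gamma>) *\<^sub>R ((z - z') - (?p - ?q))"
    by (simp add: algebra_simps)
  also have "inner (?p - ?q) \<dots> = (inner (?p - ?q) (z - z') - (norm (?p - ?q))\<^sup>2) / \<gamma>"
    by (simp add: inner_diff_right power2_norm_eq_inner)
  finally have "(norm (?p - ?q))\<^sup>2 \<le> inner (?p - ?q) (z - z')"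
    using g by (simp add: zero_le_divide_iff)
  also have "\<dots> \<le> norm (?p - ?q) * norm (z - z')" by (rule norm_cauchy_schwarz)
  finally show ?thesis
    by (cases "?p = ?q") (auto simp: power2_eq_square mult_le_cancel_left)
qed

lemma prox_perturbation_inner:
  assumes g: "\<gamma> > 0"
  shows "- inner (prox (\<lambda>u. ereal \<gamma> * f u) (z - \<gamma> *\<^sub>R e) - prox (\<lambda>u. ereal \<gamma> * f u) z) e
           \<le> \<gamma> * (norm e)\<^sup>2"
proof -
  let ?d = "prox (\<lambda>u. ereal \<gamma> * f u) (z - \<gamma> *\<^sub>R e) - prox (\<lambda>u. ereal \<gamma> * f u) z"
  have "norm ?d \<le> \<gamma> * norm e" using prox_nonexpansive[OF g, of "z - \<gamma> *\<^sub>R e" z] g by simp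
  then have "norm ?d * norm e \<le> \<gamma> * (norm e)\<^sup>2"
    unfolding power2_eq_square mult.assoc[symmetric] by (rule mult_right_mono) simp
  then show ?thesis using Cauchy_Schwarz_ineq2[of ?d e] by linarith
qed

end

section \<open>One step of the reflected forward-backward iteration\<close>

locale composite_minimization = strongly_convex_Gamma0 f \<nu>
  for f :: "'a::{real_inner, complete_space} \<Rightarrow> ereal" and \<nu> +
  fixes h :: "'a \<Rightarrow> real" and gh :: "'a \<Rightarrow> 'a" and \<mu> :: real and xbar :: 'a
  assumes h_convex: "convex_on UNIV h"
    and h_grad: "\<And>x. (h has_derivative (\<lambda>v. inner (gh x) v)) (at x)"
    and mu_pos: "\<mu> > 0"
    and gh_lipschitz: "\<And>x y. norm (gh x - gh y) \<le> \<mu> * norm (x - y)"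
    and xbar_zero: "- gh xbar \<in> subdiff f xbar"
begin

lemma gh_monotone: "0 \<le> inner (gh x - gh y) (x - y)"
  by (rule convex_on_gradient_monotone[OF h_convex h_grad])

lemma xbar_minimizes: "f xbar + ereal (h xbar) \<le> f y + ereal (h y)"
proof (cases "f y < \<infinity>")
  case True
  obtain a b where ab: "f xbar = ereal a" "f y = ereal b"
    using finite_valueE[OF subdiff_dom[OF xbar_zero]] finite_valueE[OF True] by metis
  have "F xbar + inner (- gh xbar) (y - xbar) \<le> F y" by (rule subdiff_ineq[OF xbar_zero True])
  moreover have "h xbar + inner (gh xbar) (y - xbar) \<le> h y"
    by (rule convex_on_gradient_ineq[OF h_convex h_grad])
  ultimately show ?thesis by (simp add: ab)
qed (simp add: top.not_eq_extremum)

lemma minimizer_subdiff: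
  assumes z_min: "\<forall>y. f z + ereal (h z) \<le> f y + ereal (h y)"
  shows "- gh z \<in> subdiff f z"
proof -
  have fz: "f z < \<infinity>"
  proof (rule ccontr)
    obtain a where "f xbar = ereal a" using finite_valueE[OF subdiff_dom[OF xbar_zero]] .
    moreover assume "\<not> f z < \<infinity>"
    then have "f z = \<infinity>" by (simp add: top.not_eq_extremum)
    ultimately show False using z_min[rule_format, of xbar] by simp
  qed
  show ?thesis
  proof (rule subdiffI[OF fz])
    fix y assume fy: "f y < \<infinity>"
    have "F z - F y \<le> inner (gh z) (y - z)"
    proof (rule tendsto_at_right_0_ge[OF has_derivative_difference_quotient_at_right[OF h_grad]])
      fix t :: real assume t: "0 < t" "t < 1"
      let ?zt = "(1 - t) *\<^sub>R z + t *\<^sub>R y"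
      have zt: "f ?zt < \<infinity>" "F ?zt \<le> (1 - t) * F z + t * F y"
        using dom_convex_combination[OF fz fy, of t] t by auto
      obtain a b where ab: "f z = ereal a" "f ?zt = ereal b"
        using finite_valueE[OF fz] finite_valueE[OF zt(1)] by metis
      have "F z + h z \<le> F ?zt + h ?zt" using z_min[rule_format, of ?zt] by (simp add: ab)
      moreover have "?zt = z + t *\<^sub>R (y - z)" by (simp add: algebra_simps)
      ultimately have "t * (F z - F y) \<le> h (z + t *\<^sub>R (y - z)) - h z"
        using zt(2) by (simp add: algebra_simps)
      then show "F z - F y \<le> (h (z + t *\<^sub>R (y - z)) - h z) / t"
        using t by (simp add: field_simps mult.commute)
    qed
    then show "F z + inner (- gh z) (y - z) \<le> F y" by simp
  qed
qed

lemma minimizer_unique: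
  assumes "\<forall>y. f z + ereal (h z) \<le> f y + ereal (h y)"
  shows "z = xbar"
proof -
  have "\<nu> * (norm (z - xbar))\<^sup>2 \<le> inner (z - xbar) (- gh z - - gh xbar)"
    by (rule subdiff_strongly_monotone[OF minimizer_subdiff[OF assms] xbar_zero])
  also have "\<dots> = - inner (gh z - gh xbar) (z - xbar)"
    by (simp add: inner_commute inner_diff_right inner_diff_left)
  also have "\<dots> \<le> 0" using gh_monotone[of z xbar] by simp
  finally show ?thesis using nu_pos by (simp add: mult_le_0_iff)
qed

lemma prox_step_descent:
  fixes x w :: 'a
  assumes g: "\<gamma> > 0"
  defines "x' \<equiv> prox (\<lambda>u. ereal \<gamma> * f u) (x - \<gamma> *\<^sub>R w)"
  shows "(1 + 2 * \<gamma> * \<nu>) * (norm (x' - xbar))\<^sup>2 + (norm (x - x'))\<^sup>2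
           + 2 * \<gamma> * inner (x' - xbar) (w - gh xbar) \<le> (norm (x - xbar))\<^sup>2"
proof -
  have "(1 / \<gamma>) *\<^sub>R (x - \<gamma> *\<^sub>R w - x') \<in> subdiff f x'"
    unfolding x'_def by (rule prox_subdiff[OF g])
  from subdiff_strongly_monotone[OF this xbar_zero]
  have "\<nu> * (norm (x' - xbar))\<^sup>2 \<le> inner (x' - xbar) ((1 / \<gamma>) *\<^sub>R (x - x') - (w - gh xbar))"
    using g by (simp add: algebra_simps)
  then have "2 * \<gamma> * (\<nu> * (norm (x' - xbar))\<^sup>2)
      \<le> 2 * inner (x' - xbar) (x - x') - 2 * \<gamma> * inner (x' - xbar) (w - gh xbar)"
    using g mult_left_mono[of _ _ "2 * \<gamma>"] by (fastforce simp: inner_diff_right algebra_simps)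
  moreover have "2 * inner (x' - xbar) (x - x') = (norm (x - xbar))\<^sup>2 - (norm (x' - xbar))\<^sup>2 - (norm (x - x'))\<^sup>2"
    using power2_norm_add[of "x' - xbar" "x - x'"] by simp
  ultimately show ?thesis by (simp add: algebra_simps)
qed

lemma reflected_gradient_bound:
  "- inner (q - xbar) (gh y - gh xbar) \<le> \<mu> * norm (q - xbar) * norm (y - q)"
proof -
  have "- inner (q - xbar) (gh y - gh q) \<le> norm (q - xbar) * norm (gh y - gh q)"
    using Cauchy_Schwarz_ineq2[of "q - xbar" "gh y - gh q"] by linarith
  also have "\<dots> \<le> norm (q - xbar) * (\<mu> * norm (y - q))"
    using gh_lipschitz by (intro mult_left_mono) auto
  finally show ?thesis
    using gh_monotone[of q xbar] by (simp add: inner_diff_right inner_commute algebra_simps)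
qed

(* The noise is paired with the noise-free step x_mean rather than with x', because only x_mean is
   independent of the current sample. *)
lemma reflected_step_energy:
  fixes x xp e :: 'a
  assumes g: "\<gamma> > 0" and g_nu: "\<gamma> * \<nu> \<le> 1/2"
  defines "y \<equiv> 2 *\<^sub>R x - xp"
  defines "x' \<equiv> prox (\<lambda>u. ereal \<gamma> * f u) (x - \<gamma> *\<^sub>R (gh y + e))"
  defines "x_mean \<equiv> prox (\<lambda>u. ereal \<gamma> * f u) (x - \<gamma> *\<^sub>R gh y)"
  shows "(1 + 2 * \<gamma> * \<nu> - 6 * \<gamma>\<^sup>2 * \<mu>\<^sup>2) * ((norm (x' - xbar))\<^sup>2 + (norm (x' - x))\<^sup>2 / 4)
           + 2 * \<gamma> * inner (x_mean - xbar) e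
         \<le> (norm (x - xbar))\<^sup>2 + (norm (x - xp))\<^sup>2 / 4 + 2 * \<gamma>\<^sup>2 * (norm e)\<^sup>2"
proof -
  define A B d E where "A = norm (x' - xbar)" "B = norm (x - x')" "d = norm (x - xp)" "E = norm e"
  have descent: "(1 + 2 * \<gamma> * \<nu>) * A\<^sup>2 + B\<^sup>2 + 2 * \<gamma> * inner (x' - xbar) (gh y + e - gh xbar)
                   \<le> (norm (x - xbar))\<^sup>2"
    using prox_step_descent[OF g, of x "gh y + e"] unfolding A_B_d_E_def x'_def .
  have "norm (y - x') \<le> B + d"
    using norm_triangle_ineq[of "x - x'" "x - xp"]
    unfolding y_def A_B_d_E_def by (simp add: algebra_simps scaleR_2)
  then have "- inner (x' - xbar) (gh y - gh xbar) \<le> \<mu> * A * (B + d)"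
    using reflected_gradient_bound[of x' y] mu_pos unfolding A_B_d_E_def
    by (smt (verit) mult_left_mono norm_ge_zero mult_nonneg_nonneg)
  then have grad: "- 2 * \<gamma> * inner (x' - xbar) (gh y - gh xbar) \<le> 2 * \<gamma> * \<mu> * A * B + 2 * \<gamma> * \<mu> * A * d"
    using mult_left_mono[of _ _ "2 * \<gamma>"] g by (fastforce simp: algebra_simps)
  have shift: "x - \<gamma> *\<^sub>R (gh y + e) = (x - \<gamma> *\<^sub>R gh y) - \<gamma> *\<^sub>R e" by (simp add: algebra_simps)
  have "- inner (x' - x_mean) e \<le> \<gamma> * E\<^sup>2"
    unfolding x'_def x_mean_def A_B_d_E_def shift by (rule prox_perturbation_inner[OF g])
  then have noise: "- 2 * \<gamma> * inner (x' - xbar) e \<le> - 2 * \<gamma> * inner (x_mean - xbar) e + 2 * \<gamma>\<^sup>2 * E\<^sup>2"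
    using mult_left_mono[of _ _ "2 * \<gamma>"] g
    by (fastforce simp: inner_diff_left algebra_simps power2_eq_square)
  have young_B: "2 * \<gamma> * \<mu> * A * B \<le> B\<^sup>2 / 2 + 2 * \<gamma>\<^sup>2 * \<mu>\<^sup>2 * A\<^sup>2"
    using zero_le_power2[of "B - 2 * \<gamma> * \<mu> * A"] by (simp add: power2_eq_square algebra_simps)
  have young_d: "2 * \<gamma> * \<mu> * A * d \<le> d\<^sup>2 / 4 + 4 * \<gamma>\<^sup>2 * \<mu>\<^sup>2 * A\<^sup>2"
    using zero_le_power2[of "d / 2 - 2 * \<gamma> * \<mu> * A"] by (simp add: power2_eq_square algebra_simps)
  define q where "q = 1 + 2 * \<gamma> * \<nu> - 6 * \<gamma>\<^sup>2 * \<mu>\<^sup>2"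
  have "q * A\<^sup>2 + B\<^sup>2 / 2 + 2 * \<gamma> * inner (x_mean - xbar) e \<le> (norm (x - xbar))\<^sup>2 + d\<^sup>2 / 4 + 2 * \<gamma>\<^sup>2 * E\<^sup>2"
    using descent grad noise young_B young_d unfolding q_def by (simp add: algebra_simps)
  moreover have "q * (B\<^sup>2 / 4) \<le> B\<^sup>2 / 2"
  proof -
    have "0 \<le> \<gamma>\<^sup>2 * \<mu>\<^sup>2" by simp
    then have "q \<le> 2" unfolding q_def using g_nu by linarith
    then show ?thesis using mult_right_mono[of q 2 "B\<^sup>2 / 4"] by simp
  qed
  ultimately show ?thesis
    unfolding q_def[symmetric] A_B_d_E_def by (simp add: distrib_left norm_minus_commute)
qed

lemma prox_fixed_point: "\<gamma> > 0 \<Longrightarrow> prox (\<lambda>u. ereal \<gamma> * f u) (xbar - \<gamma> *\<^sub>R gh xbar) = xbar"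
  by (rule prox_eqI) (use xbar_zero in simp_all)

lemma reflected_step_deviation:
  assumes g: "\<gamma> > 0"
  shows "norm (prox (\<lambda>u. ereal \<gamma> * f u) (x - \<gamma> *\<^sub>R (gh (2 *\<^sub>R x - xp) + e)) - xbar)
     \<le> (1 + 2 * \<gamma> * \<mu>) * norm (x - xbar) + \<gamma> * \<mu> * norm (xp - xbar) + \<gamma> * norm e"
proof -
  let ?y = "2 *\<^sub>R x - xp"
  have "norm (prox (\<lambda>u. ereal \<gamma> * f u) (x - \<gamma> *\<^sub>R (gh ?y + e)) - xbar)
      \<le> norm ((x - \<gamma> *\<^sub>R (gh ?y + e)) - (xbar - \<gamma> *\<^sub>R gh xbar))"
    using prox_nonexpansive[OF g, of _ "xbar - \<gamma> *\<^sub>R gh xbar"] by (simp add: prox_fixed_point[OF g])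
  also have "(x - \<gamma> *\<^sub>R (gh ?y + e)) - (xbar - \<gamma> *\<^sub>R gh xbar) = (x - xbar) - \<gamma> *\<^sub>R (gh ?y - gh xbar) - \<gamma> *\<^sub>R e"
    by (simp add: algebra_simps)
  also have "norm \<dots> \<le> norm (x - xbar) + \<gamma> * norm (gh ?y - gh xbar) + \<gamma> * norm e"
    using g by (smt (verit) norm_scaleR norm_triangle_ineq4 abs_of_pos)
  also have "\<gamma> * norm (gh ?y - gh xbar) \<le> \<gamma> * (\<mu> * (2 * norm (x - xbar) + norm (xp - xbar)))"
  proof -
    have e: "?y - xbar = 2 *\<^sub>R (x - xbar) - (xp - xbar)" by (simp add: algebra_simps scaleR_2)
    have "norm (?y - xbar) \<le> 2 * norm (x - xbar) + norm (xp - xbar)"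
      unfolding e using norm_triangle_ineq4[of "2 *\<^sub>R (x - xbar)" "xp - xbar"] by simp
    then have "norm (gh ?y - gh xbar) \<le> \<mu> * (2 * norm (x - xbar) + norm (xp - xbar))"
      using gh_lipschitz[of ?y xbar] mu_pos by (smt (verit) mult_left_mono)
    then show ?thesis using g by simp
  qed
  finally show ?thesis by (simp add: algebra_simps)
qed

end

section \<open>A Chung-type lemma for rate recursions\<close>

lemma inverse_Suc_le_ln_increment:
  fixes m :: real
  assumes "m > 0"
  shows "1 / (m + 1) \<le> ln (m + 1) - ln m"
proof -
  have "ln (m / (m + 1)) \<le> m / (m + 1) - 1" using assms by (intro ln_le_minus_one) auto
  also have "m / (m + 1) - 1 = - (1 / (m + 1))" using assms by (simp add: field_simps)
  finally show ?thesis using assms by (simp add: ln_div)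
qed

(* The weight m + 2K absorbs the factor 1 + 1/m - K/m^2, leaving a harmonic increment of ln. *)
lemma chung_step:
  fixes m K e a b :: real
  assumes m: "1 \<le> m" "2 * K \<le> m" and K: "K > 0" and b: "0 \<le> b" and e: "0 \<le> e"
    and rec: "(1 + 1 / m - K / m\<^sup>2) * b \<le> a + e / m\<^sup>2"
  shows "b * (m + 1 + 2 * K) \<le> a * (m + 2 * K) + e * (2 * (1 + 2 * K)) * (ln (m + 1) - ln m)"
proof -
  have "(1 + 1 / m - K / m\<^sup>2) * (m + 2 * K) - (m + 1 + 2 * K) = K * (m - 2 * K) / m\<^sup>2"
    using m by (simp add: field_simps power2_eq_square)
  also have "\<dots> \<ge> 0" using m K by simp
  finally have "m + 1 + 2 * K \<le> (1 + 1 / m - K / m\<^sup>2) * (m + 2 * K)" by simp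
  then have "b * (m + 1 + 2 * K) \<le> b * ((1 + 1 / m - K / m\<^sup>2) * (m + 2 * K))"
    using b by (rule mult_left_mono)
  also have "\<dots> = ((1 + 1 / m - K / m\<^sup>2) * b) * (m + 2 * K)" by simp
  also have "\<dots> \<le> (a + e / m\<^sup>2) * (m + 2 * K)"
    using rec m K by (intro mult_right_mono) auto
  also have "\<dots> = a * (m + 2 * K) + e * ((m + 2 * K) / m\<^sup>2)" by (simp add: algebra_simps)
  also have "(m + 2 * K) / m\<^sup>2 \<le> 2 * (1 + 2 * K) / (m + 1)"
  proof -
    have "(m + 2 * K) * (m + 1) \<le> ((1 + 2 * K) * m) * (2 * m)"
      using m K by (intro mult_mono) (auto simp: algebra_simps)
    then show ?thesis using m by (simp add: field_simps power2_eq_square)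
  qed
  also have "2 * (1 + 2 * K) / (m + 1) \<le> 2 * (1 + 2 * K) * (ln (m + 1) - ln m)"
    using mult_left_mono[OF inverse_Suc_le_ln_increment[of m], of "2 * (1 + 2 * K)"] m K by simp
  finally show ?thesis using e by (simp add: mult_left_mono mult.assoc)
qed

lemma chung_log_bound:
  fixes a :: "nat \<Rightarrow> real" and K e :: real
  assumes a_nonneg: "\<And>n. 0 \<le> a n" and K: "K > 0" and e: "0 \<le> e"
    and rec: "\<And>n. (1 + 1 / (real n + 1) - K / (real n + 1)\<^sup>2) * a (Suc n) \<le> a n + e / (real n + 1)\<^sup>2"
  shows "\<exists>B D. 0 \<le> B \<and> 0 \<le> D \<and> (\<forall>n. a n * (real n + 1) \<le> B + D * ln (real n + 1))"
proof -
  obtain N :: nat where N: "2 * K \<le> real N" using real_arch_simple by blast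
  define \<rho> where "\<rho> = 2 * (1 + 2 * K)"
  define T where "T n = a n * (real n + 1 + 2 * K)" for n
  have T_nonneg: "0 \<le> T n" for n using a_nonneg K by (simp add: T_def)
  have T_step: "T (Suc n) \<le> T n + e * \<rho> * (ln (real (Suc n) + 1) - ln (real n + 1))" if "N \<le> n" for n
  proof -
    have "2 * K \<le> real n + 1" using N that by linarith
    from chung_step[OF _ this K a_nonneg[of "Suc n"] e rec[of n]]
    show ?thesis unfolding T_def \<rho>_def by (simp add: add_ac)
  qed
  have T_tail: "T n \<le> T N + e * \<rho> * (ln (real n + 1) - ln (real N + 1))" if "N \<le> n" for n
    using that
  proof (induction n rule: dec_induct)
    case (step n)
    then show ?case using T_step[OF step(1)] unfolding right_diff_distrib by linarith
  qed simp
  define S where "S = (\<Sum>k<N. T k)"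
  have S_nonneg: "0 \<le> S" unfolding S_def using T_nonneg by (simp add: sum_nonneg)
  have e\<rho>: "0 \<le> e * \<rho>" using e K by (simp add: \<rho>_def)
  have "a n * (real n + 1) \<le> (S + T N) + e * \<rho> * ln (real n + 1)" for n
  proof -
    have an: "a n * (real n + 1) \<le> T n" unfolding T_def using a_nonneg K by (intro mult_left_mono) auto
    show ?thesis
    proof (cases "N \<le> n")
      case True
      have "e * \<rho> * (ln (real n + 1) - ln (real N + 1)) \<le> e * \<rho> * ln (real n + 1)"
        using e\<rho> by (intro mult_left_mono) auto
      then show ?thesis using an T_tail[OF True] S_nonneg by linarith
    next
      case False
      then have "T n \<le> S" unfolding S_def using T_nonneg by (intro member_le_sum) auto
      moreover have "0 \<le> e * \<rho> * ln (real n + 1)" using e\<rho> by simp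
      ultimately show ?thesis using an T_nonneg[of N] by linarith
    qed
  qed
  then show ?thesis using S_nonneg T_nonneg[of N] e\<rho> by (intro exI[of _ "S + T N"] exI[of _ "e * \<rho>"]) auto
qed

lemma chung_rate:
  fixes a :: "nat \<Rightarrow> real" and K e :: real
  assumes "\<And>n. 0 \<le> a n" and "K > 0" and "0 \<le> e"
    and "\<And>n. (1 + 1 / (real n + 1) - K / (real n + 1)\<^sup>2) * a (Suc n) \<le> a n + e / (real n + 1)\<^sup>2"
  shows "\<exists>C. \<forall>n\<ge>1. a n \<le> C * ln (real n + 1) / (real n + 1)"
proof -
  obtain B D where B: "0 \<le> B" and D: "0 \<le> D" and bound: "\<And>n. a n * (real n + 1) \<le> B + D * ln (real n + 1)"
    using chung_log_bound[OF assms] by blast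
  show ?thesis
  proof (intro exI allI impI)
    fix n :: nat assume "1 \<le> n"
    then have "ln 2 \<le> ln (real n + 1)" by simp
    then have "B \<le> B / ln 2 * ln (real n + 1)"
      using mult_left_mono[of "ln 2" "ln (real n + 1)" "B / ln 2"] B by simp
    then have "a n * (real n + 1) \<le> (B / ln 2 + D) * ln (real n + 1)"
      using bound[of n] by (simp add: algebra_simps)
    then show "a n \<le> (B / ln 2 + D) * ln (real n + 1) / (real n + 1)"
      by (subst pos_le_divide_eq) auto
  qed
qed

section \<open>The stochastic iteration\<close>

lemma (in prob_space) indep_var_integral_eq_0:
  fixes g :: "'b \<times> 'b \<Rightarrow> real"
  assumes ind: "indep_var S X T Y"
    and g_meas: "g \<in> borel_measurable (S \<Otimes>\<^sub>M T)"
    and g_int: "integrable M (\<lambda>\<omega>. g (X \<omega>, Y \<omega>))"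
    and mean_zero: "\<And>x. x \<in> space S \<Longrightarrow> (\<integral>\<omega>. g (x, Y \<omega>) \<partial>M) = 0"
  shows "(\<integral>\<omega>. g (X \<omega>, Y \<omega>) \<partial>M) = 0"
proof -
  have X: "X \<in> measurable M S" and Y: "Y \<in> measurable M T"
    and joint: "distr M S X \<Otimes>\<^sub>M distr M T Y = distr M (S \<Otimes>\<^sub>M T) (\<lambda>\<omega>. (X \<omega>, Y \<omega>))"
    using ind unfolding indep_var_distribution_eq by auto
  interpret XY: pair_sigma_finite "distr M S X" "distr M T Y"
    by (simp add: pair_sigma_finite_def prob_space_imp_sigma_finite prob_space_distr X Y)
  have XY_meas: "(\<lambda>\<omega>. (X \<omega>, Y \<omega>)) \<in> measurable M (S \<Otimes>\<^sub>M T)" using X Y by measurable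
  have "integrable (distr M S X \<Otimes>\<^sub>M distr M T Y) g"
    unfolding joint using integrable_distr_eq[OF XY_meas g_meas] g_int by simp
  then have "integral\<^sup>L (distr M S X \<Otimes>\<^sub>M distr M T Y) g = (\<integral>x. (\<integral>y. g (x, y) \<partial>distr M T Y) \<partial>distr M S X)"
    by (rule XY.integral_fst'[symmetric])
  also have "\<dots> = 0"
  proof (rule integral_eq_zero_AE[OF AE_I2])
    fix x assume "x \<in> space (distr M S X)"
    then have x: "x \<in> space S" by simp
    have "(\<lambda>y. g (x, y)) \<in> borel_measurable T" using g_meas x by measurable
    then show "(\<integral>y. g (x, y) \<partial>distr M T Y) = 0" using mean_zero[OF x] by (simp add: integral_distr[OF Y])
  qed
  finally show ?thesis
    unfolding joint by (simp add: integral_distr[OF XY_meas g_meas])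
qed

lemma fbf_state_prefix_cong:
  "(\<And>k. k < n \<Longrightarrow> w k = w' k) \<Longrightarrow> fbf_state f G \<nu> x0 xm1 w n = fbf_state f G \<nu> x0 xm1 w' n"
  by (induction n) (auto simp: Let_def)

lemma power2_sum3_le:
  fixes u a b c :: real
  assumes "0 \<le> u" "u \<le> a + b + c"
  shows "u\<^sup>2 \<le> 3 * (a\<^sup>2 + b\<^sup>2 + c\<^sup>2)"
proof -
  have "u\<^sup>2 \<le> (a + b + c)\<^sup>2" using power_mono[OF assms(2,1)] .
  also have "\<dots> \<le> 3 * (a\<^sup>2 + b\<^sup>2 + c\<^sup>2)"
    using zero_le_power2[of "a - b"] zero_le_power2[of "b - c"] zero_le_power2[of "a - c"]
    by (simp add: power2_eq_square algebra_simps)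
  finally show ?thesis .
qed

locale stochastic_reflected_fb = composite_minimization f \<nu> h gh \<mu> xbar + prob_space M
  for f :: "'a::{real_inner, complete_space, second_countable_topology} \<Rightarrow> ereal" and \<nu> h gh \<mu> xbar
    and M :: "'w measure" +
  fixes GH :: "'a \<Rightarrow> real^'m \<Rightarrow> 'a" and \<xi> :: "nat \<Rightarrow> 'w \<Rightarrow> real^'m" and x0 xm1 :: 'a and c :: real
  assumes xi_rv: "\<And>n. \<xi> n \<in> borel_measurable M"
    and xi_indep: "indep_vars (\<lambda>_. borel) \<xi> UNIV"
    and xi_ident: "\<And>n. distr M borel (\<xi> n) = distr M borel (\<xi> 0)"
    and GH_meas: "(\<lambda>(x, z). GH x z) \<in> borel_measurable (borel \<Otimes>\<^sub>M borel)"
    and GH_unbiased: "\<And>x. integrable M (\<lambda>\<omega>. GH x (\<xi> 0 \<omega>)) \<and> (\<integral>\<omega>. GH x (\<xi> 0 \<omega>) \<partial>M) = gh x"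
    and var_bound: "\<And>n. AE \<omega> in M.
          nn_cond_exp M (gen_sigma M \<xi> n)
            (\<lambda>\<omega>'. ennreal ((norm (GH (fbf_y f GH \<nu> x0 xm1 (\<lambda>k. \<xi> k \<omega>') n) (\<xi> n \<omega>')
                                 - gh (fbf_y f GH \<nu> x0 xm1 (\<lambda>k. \<xi> k \<omega>') n)))\<^sup>2)) \<omega>
          \<le> ennreal c"
begin

abbreviation prox_step :: "nat \<Rightarrow> 'a \<Rightarrow> 'a" where
  "prox_step n \<equiv> prox (\<lambda>u. ereal (step \<nu> n) * f u)"

abbreviation x_path :: "nat \<Rightarrow> (nat \<Rightarrow> real^'m) \<Rightarrow> 'a" where
  "x_path n w \<equiv> fbf_x f GH \<nu> x0 xm1 w n"

abbreviation y_path :: "nat \<Rightarrow> (nat \<Rightarrow> real^'m) \<Rightarrow> 'a" where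
  "y_path n w \<equiv> fbf_y f GH \<nu> x0 xm1 w n"

definition prev_path :: "nat \<Rightarrow> (nat \<Rightarrow> real^'m) \<Rightarrow> 'a" where
  "prev_path n w = snd (fbf_state f GH \<nu> x0 xm1 w n)"

definition mean_step_path :: "nat \<Rightarrow> (nat \<Rightarrow> real^'m) \<Rightarrow> 'a" where
  "mean_step_path n w = prox_step n (x_path n w - step \<nu> n *\<^sub>R gh (y_path n w))"

lemma step_pos: "0 < step \<nu> n"
  using nu_pos by (simp add: step_def)

lemma step_nu_le: "step \<nu> n * \<nu> \<le> 1/2"
proof -
  have "step \<nu> n * \<nu> = 1 / (2 * (real n + 1))" using nu_pos by (simp add: step_def)
  also have "\<dots> \<le> 1 / 2" by (intro divide_left_mono) auto
  finally show ?thesis .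
qed

lemma y_path_eq: "y_path n w = 2 *\<^sub>R x_path n w - prev_path n w"
  by (simp add: fbf_y_def fbf_x_def prev_path_def)

lemma x_path_0: "x_path 0 w = x0" and prev_path_0: "prev_path 0 w = xm1"
  by (simp_all add: fbf_x_def prev_path_def)

lemma x_path_Suc: "x_path (Suc n) w = prox_step n (x_path n w - step \<nu> n *\<^sub>R GH (y_path n w) (w n))"
  and prev_path_Suc: "prev_path (Suc n) w = x_path n w"
  by (simp_all add: fbf_x_def fbf_y_def prev_path_def Let_def)

lemma prox_step_continuous: "continuous_on UNIV (prox_step n)"
  using prox_nonexpansive[OF step_pos]
  by (intro lipschitz_on_continuous_on[of 1]) (auto simp: lipschitz_on_def dist_norm)

lemma gh_continuous: "continuous_on UNIV gh"
  using gh_lipschitz mu_pos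
  by (intro lipschitz_on_continuous_on[of \<mu>]) (auto simp: lipschitz_on_def dist_norm)

lemma GH_measurable_comp:
  "a \<in> borel_measurable N \<Longrightarrow> b \<in> borel_measurable N \<Longrightarrow> (\<lambda>x. GH (a x) (b x)) \<in> borel_measurable N"
  using measurable_comp[OF measurable_Pair GH_meas] by (simp add: comp_def case_prod_beta')

lemma path_measurable:
  assumes "n \<le> N"
  shows "x_path n \<in> borel_measurable (PiM {..<N} (\<lambda>_. borel))"
    and "prev_path n \<in> borel_measurable (PiM {..<N} (\<lambda>_. borel))"
proof -
  have "x_path n \<in> borel_measurable (PiM {..<N} (\<lambda>_. borel))
          \<and> prev_path n \<in> borel_measurable (PiM {..<N} (\<lambda>_. borel))"
    using assms
  proof (induction n)
    case 0 then show ?case by (simp add: x_path_0 prev_path_0)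
  next
    case (Suc n)
    then have x: "x_path n \<in> borel_measurable (PiM {..<N} (\<lambda>_. borel))"
      and y: "y_path n \<in> borel_measurable (PiM {..<N} (\<lambda>_. borel))"
      unfolding y_path_eq[abs_def] by auto
    have "(\<lambda>w. w n) \<in> measurable (PiM {..<N} (\<lambda>_. borel)) (borel :: (real^'m) measure)"
      using Suc.prems by (intro measurable_component_singleton) auto
    with x y have "(\<lambda>w. x_path n w - step \<nu> n *\<^sub>R GH (y_path n w) (w n)) \<in> borel_measurable (PiM {..<N} (\<lambda>_. borel))"
      using GH_measurable_comp by measurable
    from borel_measurable_continuous_on[OF prox_step_continuous this] x
    show ?case by (simp add: x_path_Suc[abs_def] prev_path_Suc[abs_def])
  qed
  then show "x_path n \<in> borel_measurable (PiM {..<N} (\<lambda>_. borel))"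
    and "prev_path n \<in> borel_measurable (PiM {..<N} (\<lambda>_. borel))" by auto
qed

lemma y_path_measurable: "y_path n \<in> borel_measurable (PiM {..<n} (\<lambda>_. borel))"
  using path_measurable[of n n] unfolding y_path_eq[abs_def] by measurable

lemma mean_step_path_measurable: "mean_step_path n \<in> borel_measurable (PiM {..<n} (\<lambda>_. borel))"
proof -
  have "(\<lambda>w. gh (y_path n w)) \<in> borel_measurable (PiM {..<n} (\<lambda>_. borel))"
    by (rule borel_measurable_continuous_on[OF gh_continuous y_path_measurable])
  then have "(\<lambda>w. x_path n w - step \<nu> n *\<^sub>R gh (y_path n w)) \<in> borel_measurable (PiM {..<n} (\<lambda>_. borel))"
    using path_measurable(1)[of n n] by measurable
  from borel_measurable_continuous_on[OF prox_step_continuous this]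
  show ?thesis by (simp add: mean_step_path_def[abs_def])
qed

definition prefix :: "nat \<Rightarrow> 'w \<Rightarrow> nat \<Rightarrow> real^'m" where
  "prefix n \<omega> = (\<lambda>i\<in>{..<n}. \<xi> i \<omega>)"

definition X :: "nat \<Rightarrow> 'w \<Rightarrow> 'a" where
  "X n \<omega> = x_path n (\<lambda>k. \<xi> k \<omega>)"

definition X_prev :: "nat \<Rightarrow> 'w \<Rightarrow> 'a" where
  "X_prev n \<omega> = prev_path n (\<lambda>k. \<xi> k \<omega>)"

definition Y :: "nat \<Rightarrow> 'w \<Rightarrow> 'a" where
  "Y n \<omega> = y_path n (\<lambda>k. \<xi> k \<omega>)"

definition X_mean :: "nat \<Rightarrow> 'w \<Rightarrow> 'a" where
  "X_mean n \<omega> = mean_step_path n (\<lambda>k. \<xi> k \<omega>)"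

definition noise :: "nat \<Rightarrow> 'w \<Rightarrow> 'a" where
  "noise n \<omega> = GH (Y n \<omega>) (\<xi> n \<omega>) - gh (Y n \<omega>)"

lemma prefix_measurable: "prefix n \<in> measurable M (PiM {..<n} (\<lambda>_. borel))"
  unfolding prefix_def[abs_def] using xi_rv by (intro measurable_restrict) auto

lemma fbf_state_prefix: "fbf_state f GH \<nu> x0 xm1 (prefix n \<omega>) n = fbf_state f GH \<nu> x0 xm1 (\<lambda>k. \<xi> k \<omega>) n"
  by (rule fbf_state_prefix_cong) (simp add: prefix_def)

lemma X_prefix: "X n \<omega> = x_path n (prefix n \<omega>)"
  and X_prev_prefix: "X_prev n \<omega> = prev_path n (prefix n \<omega>)"
  and Y_prefix: "Y n \<omega> = y_path n (prefix n \<omega>)"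
  and X_mean_prefix: "X_mean n \<omega> = mean_step_path n (prefix n \<omega>)"
  by (simp_all add: X_def X_prev_def Y_def X_mean_def mean_step_path_def fbf_x_def fbf_y_def
      prev_path_def fbf_state_prefix)

lemma X_measurable: "X n \<in> borel_measurable M"
  and X_prev_measurable: "X_prev n \<in> borel_measurable M"
  and Y_measurable: "Y n \<in> borel_measurable M"
  and X_mean_measurable: "X_mean n \<in> borel_measurable M"
  using measurable_comp[OF prefix_measurable path_measurable(1)[of n n]]
    measurable_comp[OF prefix_measurable path_measurable(2)[of n n]]
    measurable_comp[OF prefix_measurable y_path_measurable]
    measurable_comp[OF prefix_measurable mean_step_path_measurable]
  by (simp_all add: comp_def X_prefix[abs_def] X_prev_prefix[abs_def] Y_prefix[abs_def]
      X_mean_prefix[abs_def])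

lemma noise_measurable: "noise n \<in> borel_measurable M"
  unfolding noise_def[abs_def]
  using GH_measurable_comp[OF Y_measurable xi_rv] borel_measurable_continuous_on[OF gh_continuous Y_measurable]
  by measurable

lemma X_0: "X 0 \<omega> = x0" and X_prev_0: "X_prev 0 \<omega> = xm1"
  by (simp_all add: X_def X_prev_def x_path_0 prev_path_0)

lemma X_Suc: "X (Suc n) \<omega> = prox_step n (X n \<omega> - step \<nu> n *\<^sub>R (gh (Y n \<omega>) + noise n \<omega>))"
  and X_prev_Suc: "X_prev (Suc n) \<omega> = X n \<omega>"
  by (simp_all add: X_def X_prev_def Y_def noise_def x_path_Suc prev_path_Suc)

lemma Y_eq: "Y n \<omega> = 2 *\<^sub>R X n \<omega> - X_prev n \<omega>"
  by (simp add: X_def X_prev_def Y_def y_path_eq)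

lemma X_mean_eq: "X_mean n \<omega> = prox_step n (X n \<omega> - step \<nu> n *\<^sub>R gh (Y n \<omega>))"
  by (simp add: X_mean_def mean_step_path_def X_def Y_def)

lemma noise_inner_mean_zero: "(\<integral>\<omega>. inner v (GH y (\<xi> n \<omega>) - gh y) \<partial>M) = 0"
proof -
  let ?h = "\<lambda>s. inner v (GH y s - gh y)"
  have "(\<lambda>s. GH y s) \<in> borel_measurable borel" by (rule GH_measurable_comp) auto
  then have m: "?h \<in> borel_measurable borel" by measurable
  have "(\<integral>\<omega>. ?h (\<xi> n \<omega>) \<partial>M) = (\<integral>\<omega>. ?h (\<xi> 0 \<omega>) \<partial>M)"
    using integral_distr[OF xi_rv m, of n] integral_distr[OF xi_rv m, of 0] xi_ident[of n] by simp
  also have "\<dots> = (\<integral>\<omega>. inner v (GH y (\<xi> 0 \<omega>)) \<partial>M) - (\<integral>\<omega>. inner v (gh y) \<partial>M)"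
    using GH_unbiased[of y] by (simp add: inner_diff_right Bochner_Integration.integral_diff)
  also have "\<dots> = 0" using GH_unbiased[of y] prob_space by simp
  finally show ?thesis .
qed

lemma gen_sigma_subalgebra: "subalgebra M (gen_sigma M \<xi> n)"
proof -
  let ?G = "{\<xi> i -` A \<inter> space M | i A. i < n \<and> A \<in> sets borel}"
  have G: "?G \<subseteq> Pow (space M)" by auto
  have "?G \<subseteq> sets M" using xi_rv by (auto intro!: measurable_sets)
  then show ?thesis unfolding subalgebra_def gen_sigma_def
    by (simp add: space_measure_of_conv sets_measure_of[OF G] sets.sigma_sets_subset)
qed

lemma noise_nn_second_moment: "(\<integral>\<^sup>+ \<omega>. ennreal ((norm (noise n \<omega>))\<^sup>2) \<partial>M) \<le> ennreal c"
proof -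
  interpret S: finite_measure_subalgebra M "gen_sigma M \<xi> n"
    by unfold_locales (rule gen_sigma_subalgebra)
  let ?g = "\<lambda>\<omega>. ennreal ((norm (noise n \<omega>))\<^sup>2)"
  have "?g \<in> borel_measurable M" using noise_measurable by measurable
  then have "(\<integral>\<^sup>+ \<omega>. ?g \<omega> \<partial>M) = (\<integral>\<^sup>+ \<omega>. nn_cond_exp M (gen_sigma M \<xi> n) ?g \<omega> \<partial>M)"
    using S.nn_cond_exp_intg[of "\<lambda>_. 1" ?g] by simp
  also have "\<dots> \<le> (\<integral>\<^sup>+ \<omega>. ennreal c \<partial>M)"
    using var_bound[of n] by (intro nn_integral_mono_AE) (simp add: noise_def Y_def)
  also have "\<dots> = ennreal c" by (simp add: emeasure_space_1)
  finally show ?thesis .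
qed

(* max c 0, because ennreal truncates a negative c to 0. *)
lemma noise_second_moment:
  shows "integrable M (\<lambda>\<omega>. (norm (noise n \<omega>))\<^sup>2)"
    and "(\<integral>\<omega>. (norm (noise n \<omega>))\<^sup>2 \<partial>M) \<le> max c 0"
proof -
  show int: "integrable M (\<lambda>\<omega>. (norm (noise n \<omega>))\<^sup>2)"
    using noise_measurable noise_nn_second_moment[of n]
    by (intro integrableI_bounded) (auto simp: le_less_trans)
  have "ennreal (\<integral>\<omega>. (norm (noise n \<omega>))\<^sup>2 \<partial>M) \<le> ennreal (max 0 c)"
    using noise_nn_second_moment[of n] nn_integral_eq_integral[OF int] by (simp add: ennreal_max_0)
  then show "(\<integral>\<omega>. (norm (noise n \<omega>))\<^sup>2 \<partial>M) \<le> max c 0"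
    by (subst (asm) ennreal_le_iff) (auto simp: max.commute)
qed

lemma X_mean_deviation:
  "norm (X_mean n \<omega> - xbar)
     \<le> (1 + 2 * step \<nu> n * \<mu>) * norm (X n \<omega> - xbar) + step \<nu> n * \<mu> * norm (X_prev n \<omega> - xbar)"
  using reflected_step_deviation[OF step_pos, of n "X n \<omega>" "X_prev n \<omega>" 0]
  by (simp add: X_mean_eq Y_eq)

lemma X_Suc_deviation:
  "norm (X (Suc n) \<omega> - xbar)
     \<le> (1 + 2 * step \<nu> n * \<mu>) * norm (X n \<omega> - xbar) + step \<nu> n * \<mu> * norm (X_prev n \<omega> - xbar)
       + step \<nu> n * norm (noise n \<omega>)"
  using reflected_step_deviation[OF step_pos, of n "X n \<omega>" "X_prev n \<omega>" "noise n \<omega>"]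
  by (simp add: X_Suc Y_eq)

lemma square_integrable:
  "integrable M (\<lambda>\<omega>. (norm (X n \<omega> - xbar))\<^sup>2) \<and> integrable M (\<lambda>\<omega>. (norm (X_prev n \<omega> - xbar))\<^sup>2)"
proof (induction n)
  case 0 then show ?case by (simp add: X_0 X_prev_0)
next
  case (Suc n)
  let ?a = "1 + 2 * step \<nu> n * \<mu>" and ?b = "step \<nu> n * \<mu>" and ?c = "step \<nu> n"
  have "integrable M (\<lambda>\<omega>. 3 * ((?a * norm (X n \<omega> - xbar))\<^sup>2 + (?b * norm (X_prev n \<omega> - xbar))\<^sup>2
                                 + (?c * norm (noise n \<omega>))\<^sup>2))"
    using Suc.IH noise_second_moment(1)[of n] by (simp add: power_mult_distrib)
  then have "integrable M (\<lambda>\<omega>. (norm (X (Suc n) \<omega> - xbar))\<^sup>2)"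
  proof (rule Bochner_Integration.integrable_bound)
    show "(\<lambda>\<omega>. (norm (X (Suc n) \<omega> - xbar))\<^sup>2) \<in> borel_measurable M" using X_measurable by measurable
    show "AE \<omega> in M. norm ((norm (X (Suc n) \<omega> - xbar))\<^sup>2)
            \<le> norm (3 * ((?a * norm (X n \<omega> - xbar))\<^sup>2 + (?b * norm (X_prev n \<omega> - xbar))\<^sup>2
                          + (?c * norm (noise n \<omega>))\<^sup>2))"
      using power2_sum3_le[OF norm_ge_zero X_Suc_deviation] by (simp add: mult.assoc)
  qed
  then show ?case using Suc.IH by (simp add: X_prev_Suc)
qed

lemma cross_term_integrable: "integrable M (\<lambda>\<omega>. inner (X_mean n \<omega> - xbar) (noise n \<omega>))"
proof -
  let ?a = "1 + 2 * step \<nu> n * \<mu>" and ?b = "step \<nu> n * \<mu>"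
  let ?B = "\<lambda>\<omega>. 3 * ((?a * norm (X n \<omega> - xbar))\<^sup>2 + (?b * norm (X_prev n \<omega> - xbar))\<^sup>2) / 2
                + (norm (noise n \<omega>))\<^sup>2 / 2"
  have "integrable M ?B"
    using square_integrable[of n] noise_second_moment(1)[of n] by (simp add: power_mult_distrib)
  then show ?thesis
  proof (rule Bochner_Integration.integrable_bound)
    show "(\<lambda>\<omega>. inner (X_mean n \<omega> - xbar) (noise n \<omega>)) \<in> borel_measurable M"
      using X_mean_measurable noise_measurable by measurable
    show "AE \<omega> in M. norm (inner (X_mean n \<omega> - xbar) (noise n \<omega>)) \<le> norm (?B \<omega>)"
    proof (rule AE_I2)
      fix \<omega>
      have "(norm (X_mean n \<omega> - xbar))\<^sup>2 \<le> 3 * ((?a * norm (X n \<omega> - xbar))\<^sup>2 + (?b * norm (X_prev n \<omega> - xbar))\<^sup>2)"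
        using power2_sum3_le[OF norm_ge_zero, of "X_mean n \<omega> - xbar" _ _ 0] X_mean_deviation by simp
      moreover have "\<bar>inner (X_mean n \<omega> - xbar) (noise n \<omega>)\<bar>
          \<le> (norm (X_mean n \<omega> - xbar))\<^sup>2 / 2 + (norm (noise n \<omega>))\<^sup>2 / 2"
        using Cauchy_Schwarz_ineq2[of "X_mean n \<omega> - xbar" "noise n \<omega>"]
          zero_le_power2[of "norm (X_mean n \<omega> - xbar) - norm (noise n \<omega>)"]
        by (simp add: power2_diff)
      ultimately have "\<bar>inner (X_mean n \<omega> - xbar) (noise n \<omega>)\<bar> \<le> ?B \<omega>" by linarith
      then show "norm (inner (X_mean n \<omega> - xbar) (noise n \<omega>)) \<le> norm (?B \<omega>)" by simp
    qed
  qed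
qed

(* X_mean n and Y n are functions of xi_0, ..., xi_(n-1), which are independent of xi_n; the latter
   enters through its restriction to {n} because indep_var needs both variables in one type. *)
lemma cross_term_mean_zero: "(\<integral>\<omega>. inner (X_mean n \<omega> - xbar) (noise n \<omega>) \<partial>M) = 0"
proof -
  let ?S = "PiM {..<n} (\<lambda>_. borel :: (real^'m) measure)" and ?T = "PiM {n} (\<lambda>_. borel :: (real^'m) measure)"
  define current where "current \<omega> = (\<lambda>i\<in>{n}. \<xi> i \<omega>)" for \<omega>
  define g where "g p = inner (mean_step_path n (fst p) - xbar)
                              (GH (y_path n (fst p)) (snd p n) - gh (y_path n (fst p)))" for p
  have ind: "indep_var ?S (prefix n) ?T current"
    using indep_var_restrict[OF xi_indep, of "{..<n}" "{n}"]
    by (simp add: prefix_def[abs_def] current_def[abs_def])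
  have g_meas: "g \<in> borel_measurable (?S \<Otimes>\<^sub>M ?T)"
  proof -
    have y: "(\<lambda>p. y_path n (fst p)) \<in> borel_measurable (?S \<Otimes>\<^sub>M ?T)"
      using measurable_comp[OF measurable_fst y_path_measurable] by (simp add: comp_def)
    have "(\<lambda>p. mean_step_path n (fst p)) \<in> borel_measurable (?S \<Otimes>\<^sub>M ?T)"
      using measurable_comp[OF measurable_fst mean_step_path_measurable] by (simp add: comp_def)
    moreover have "(\<lambda>p. snd p n) \<in> measurable (?S \<Otimes>\<^sub>M ?T) borel"
      using measurable_comp[OF measurable_snd measurable_component_singleton[of n "{n}"]]
      by (simp add: comp_def)
    ultimately show ?thesis unfolding g_def[abs_def]
      using GH_measurable_comp[OF y] borel_measurable_continuous_on[OF gh_continuous y] by measurable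
  qed
  have g_eq: "g (prefix n \<omega>, current \<omega>) = inner (X_mean n \<omega> - xbar) (noise n \<omega>)" for \<omega>
    by (simp add: g_def current_def X_mean_prefix Y_prefix noise_def)
  have "(\<integral>\<omega>. g (prefix n \<omega>, current \<omega>) \<partial>M) = 0"
  proof (rule indep_var_integral_eq_0[OF ind g_meas])
    show "integrable M (\<lambda>\<omega>. g (prefix n \<omega>, current \<omega>))"
      unfolding g_eq by (rule cross_term_integrable)
    show "(\<integral>\<omega>. g (x, current \<omega>) \<partial>M) = 0" for x
      using noise_inner_mean_zero[of "mean_step_path n x - xbar" "y_path n x" n]
      by (simp add: g_def current_def)
  qed
  then show ?thesis unfolding g_eq .
qed

definition energy :: "nat \<Rightarrow> 'w \<Rightarrow> real" where
  "energy n \<omega> = (norm (X n \<omega> - xbar))\<^sup>2 + (norm (X n \<omega> - X_prev n \<omega>))\<^sup>2 / 4"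

lemma energy_integrable: "integrable M (energy n)"
proof -
  have "integrable M (\<lambda>\<omega>. 2 * (norm (X n \<omega> - xbar))\<^sup>2 + 2 * (norm (X_prev n \<omega> - xbar))\<^sup>2)"
    using square_integrable[of n] by simp
  then have "integrable M (\<lambda>\<omega>. (norm (X n \<omega> - X_prev n \<omega>))\<^sup>2)"
  proof (rule Bochner_Integration.integrable_bound)
    show "(\<lambda>\<omega>. (norm (X n \<omega> - X_prev n \<omega>))\<^sup>2) \<in> borel_measurable M"
      using X_measurable X_prev_measurable by measurable
    show "AE \<omega> in M. norm ((norm (X n \<omega> - X_prev n \<omega>))\<^sup>2)
                     \<le> norm (2 * (norm (X n \<omega> - xbar))\<^sup>2 + 2 * (norm (X_prev n \<omega> - xbar))\<^sup>2)"
    proof (rule AE_I2)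
      fix \<omega>
      have "norm (X n \<omega> - X_prev n \<omega>) \<le> norm (X n \<omega> - xbar) + norm (X_prev n \<omega> - xbar)"
        using norm_triangle_ineq4[of "X n \<omega> - xbar" "X_prev n \<omega> - xbar"] by simp
      then have "(norm (X n \<omega> - X_prev n \<omega>))\<^sup>2 \<le> (norm (X n \<omega> - xbar) + norm (X_prev n \<omega> - xbar))\<^sup>2"
        by (intro power_mono) auto
      also have "\<dots> \<le> 2 * (norm (X n \<omega> - xbar))\<^sup>2 + 2 * (norm (X_prev n \<omega> - xbar))\<^sup>2"
        using zero_le_power2[of "norm (X n \<omega> - xbar) - norm (X_prev n \<omega> - xbar)"]
        by (simp add: power2_sum power2_diff)
      finally show "norm ((norm (X n \<omega> - X_prev n \<omega>))\<^sup>2)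
                     \<le> norm (2 * (norm (X n \<omega> - xbar))\<^sup>2 + 2 * (norm (X_prev n \<omega> - xbar))\<^sup>2)" by simp
    qed
  qed
  then show ?thesis using square_integrable[of n] by (simp add: energy_def[abs_def])
qed

lemma energy_step:
  "(1 + 2 * step \<nu> n * \<nu> - 6 * (step \<nu> n)\<^sup>2 * \<mu>\<^sup>2) * energy (Suc n) \<omega>
     + 2 * step \<nu> n * inner (X_mean n \<omega> - xbar) (noise n \<omega>)
   \<le> energy n \<omega> + 2 * (step \<nu> n)\<^sup>2 * (norm (noise n \<omega>))\<^sup>2"
  using reflected_step_energy[OF step_pos[of n] step_nu_le[of n], of "X n \<omega>" "X_prev n \<omega>" "noise n \<omega>"]
  by (simp add: energy_def X_Suc X_prev_Suc X_mean_eq Y_eq)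

lemma expected_energy_step:
  "(1 + 2 * step \<nu> n * \<nu> - 6 * (step \<nu> n)\<^sup>2 * \<mu>\<^sup>2) * (\<integral>\<omega>. energy (Suc n) \<omega> \<partial>M)
     \<le> (\<integral>\<omega>. energy n \<omega> \<partial>M) + 2 * (step \<nu> n)\<^sup>2 * max c 0"
proof -
  let ?q = "1 + 2 * step \<nu> n * \<nu> - 6 * (step \<nu> n)\<^sup>2 * \<mu>\<^sup>2"
  have "?q * (\<integral>\<omega>. energy (Suc n) \<omega> \<partial>M) + 2 * step \<nu> n * (\<integral>\<omega>. inner (X_mean n \<omega> - xbar) (noise n \<omega>) \<partial>M)
      = (\<integral>\<omega>. ?q * energy (Suc n) \<omega> + 2 * step \<nu> n * inner (X_mean n \<omega> - xbar) (noise n \<omega>) \<partial>M)"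
    using energy_integrable cross_term_integrable by simp
  also have "\<dots> \<le> (\<integral>\<omega>. energy n \<omega> + 2 * (step \<nu> n)\<^sup>2 * (norm (noise n \<omega>))\<^sup>2 \<partial>M)"
    using energy_integrable cross_term_integrable noise_second_moment(1) energy_step
    by (intro Bochner_Integration.integral_mono) auto
  also have "\<dots> = (\<integral>\<omega>. energy n \<omega> \<partial>M) + 2 * (step \<nu> n)\<^sup>2 * (\<integral>\<omega>. (norm (noise n \<omega>))\<^sup>2 \<partial>M)"
    using energy_integrable noise_second_moment(1) by simp
  also have "\<dots> \<le> (\<integral>\<omega>. energy n \<omega> \<partial>M) + 2 * (step \<nu> n)\<^sup>2 * max c 0"
    using noise_second_moment(2) by (intro add_left_mono mult_left_mono) auto
  finally show ?thesis using cross_term_mean_zero by simp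
qed

lemma expected_energy_rate: "\<exists>C. \<forall>n\<ge>1. (\<integral>\<omega>. energy n \<omega> \<partial>M) \<le> C * ln (real n + 1) / (real n + 1)"
proof (rule chung_rate)
  show "0 \<le> (\<integral>\<omega>. energy n \<omega> \<partial>M)" for n
    by (rule integral_nonneg_AE) (simp add: energy_def)
  show "3 * \<mu>\<^sup>2 / (2 * \<nu>\<^sup>2) > 0" and "0 \<le> max c 0 / (2 * \<nu>\<^sup>2)"
    using mu_pos nu_pos by auto
  fix n
  define m where "m = real n + 1"
  have m: "m > 0" and nu: "\<nu> \<noteq> 0" using nu_pos by (auto simp: m_def)
  have s: "step \<nu> n = 1 / (2 * \<nu> * m)" by (simp add: step_def m_def)
  have "2 * step \<nu> n * \<nu> = 1 / m"
    and "6 * (step \<nu> n)\<^sup>2 * \<mu>\<^sup>2 = 3 * \<mu>\<^sup>2 / (2 * \<nu>\<^sup>2) / m\<^sup>2"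
    and "2 * (step \<nu> n)\<^sup>2 * max c 0 = max c 0 / (2 * \<nu>\<^sup>2) / m\<^sup>2"
    unfolding s using m nu by (simp_all add: field_simps power2_eq_square)
  then show "(1 + 1 / (real n + 1) - 3 * \<mu>\<^sup>2 / (2 * \<nu>\<^sup>2) / (real n + 1)\<^sup>2) * (\<integral>\<omega>. energy (Suc n) \<omega> \<partial>M)
      \<le> (\<integral>\<omega>. energy n \<omega> \<partial>M) + max c 0 / (2 * \<nu>\<^sup>2) / (real n + 1)\<^sup>2"
    using expected_energy_step[of n] by (simp add: m_def)
qed

lemma mean_square_error_rate:
  "\<exists>C. \<forall>n\<ge>1. (\<integral>\<^sup>+ \<omega>. ennreal ((norm (X n \<omega> - xbar))\<^sup>2) \<partial>M) \<le> ennreal (C * ln (real n + 1) / (real n + 1))"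
proof -
  obtain C where C: "\<And>n. n \<ge> 1 \<Longrightarrow> (\<integral>\<omega>. energy n \<omega> \<partial>M) \<le> C * ln (real n + 1) / (real n + 1)"
    using expected_energy_rate by blast
  have "(\<integral>\<^sup>+ \<omega>. ennreal ((norm (X n \<omega> - xbar))\<^sup>2) \<partial>M) \<le> ennreal (C * ln (real n + 1) / (real n + 1))"
    if n: "n \<ge> 1" for n
  proof -
    have "(\<integral>\<^sup>+ \<omega>. ennreal ((norm (X n \<omega> - xbar))\<^sup>2) \<partial>M) = ennreal (\<integral>\<omega>. (norm (X n \<omega> - xbar))\<^sup>2 \<partial>M)"
      using square_integrable[of n] by (intro nn_integral_eq_integral) auto
    also have "(\<integral>\<omega>. (norm (X n \<omega> - xbar))\<^sup>2 \<partial>M) \<le> (\<integral>\<omega>. energy n \<omega> \<partial>M)"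
      by (rule Bochner_Integration.integral_mono[OF conjunct1[OF square_integrable[of n]] energy_integrable[of n]])
        (simp add: energy_def)
    finally show ?thesis using C[OF n] by (simp add: ennreal_leI order_trans)
  qed
  then show ?thesis by blast
qed

end

theorem mainTheorem8:
  fixes f :: "'a::{real_inner, complete_space, second_countable_topology} \<Rightarrow> ereal"
    and h :: "'a \<Rightarrow> real" and gh :: "'a \<Rightarrow> 'a"
    and H :: "'a \<Rightarrow> real^'m \<Rightarrow> real" and GH :: "'a \<Rightarrow> real^'m \<Rightarrow> 'a"
    and \<Omega>P :: "(real^'m) set"
    and M :: "'w measure" and \<xi> :: "nat \<Rightarrow> 'w \<Rightarrow> real^'m"
    and \<nu> \<mu> c :: real and x0 xm1 :: 'a
  assumes f_Gamma0: "f \<in> Gamma0"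
    and nu_pos: "\<nu> > 0"
    and f_strong: "strongly_convex \<nu> f"
    and h_convex: "convex_on UNIV h"
    and h_grad: "\<And>x. (h has_derivative (\<lambda>v. inner (gh x) v)) (at x)"
    and mu_pos: "\<mu> > 0"
    and gh_lip: "\<And>x y. norm (gh x - gh y) \<le> \<mu> * norm (x - y)"
    and prob: "prob_space M"
    and xi_rv: "\<And>n. \<xi> n \<in> borel_measurable M"
    and xi_indep: "prob_space.indep_vars M (\<lambda>_. borel) \<xi> UNIV"
    and xi_ident: "\<And>n. distr M borel (\<xi> n) = distr M borel (\<xi> 0)"
    and xi_supp: "AE \<omega> in M. \<xi> 0 \<omega> \<in> \<Omega>P"
    and H_convex: "\<And>z. z \<in> \<Omega>P \<Longrightarrow> convex_on UNIV (\<lambda>x. H x z)"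
    and H_grad: "\<And>z x. z \<in> \<Omega>P \<Longrightarrow> ((\<lambda>x. H x z) has_derivative (\<lambda>v. inner (GH x z) v)) (at x)"
    and GH_meas: "(\<lambda>(x, z). GH x z) \<in> borel_measurable (borel \<Otimes>\<^sub>M borel)"
    and h_expect: "\<And>x. integrable M (\<lambda>\<omega>. H x (\<xi> 0 \<omega>)) \<and> h x = (\<integral>\<omega>. H x (\<xi> 0 \<omega>) \<partial>M)"
    and GH_unbiased: "\<And>x. integrable M (\<lambda>\<omega>. GH x (\<xi> 0 \<omega>)) \<and> (\<integral>\<omega>. GH x (\<xi> 0 \<omega>) \<partial>M) = gh x"
    and zer_nonempty: "\<exists>x. - gh x \<in> subdiff f x"
    and var_bound: "\<And>n. AE \<omega> in M.
          nn_cond_exp M (gen_sigma M \<xi> n)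
            (\<lambda>\<omega>'. ennreal ((norm (GH (fbf_y f GH \<nu> x0 xm1 (\<lambda>k. \<xi> k \<omega>') n) (\<xi> n \<omega>')
                                 - gh (fbf_y f GH \<nu> x0 xm1 (\<lambda>k. \<xi> k \<omega>') n)))\<^sup>2)) \<omega>
          \<le> ennreal c"
  shows "\<exists>xbar. (\<forall>y. f xbar + ereal (h xbar) \<le> f y + ereal (h y))
           \<and> (\<forall>z. (\<forall>y. f z + ereal (h z) \<le> f y + ereal (h y)) \<longrightarrow> z = xbar)
           \<and> (\<exists>C. \<forall>n. n > (LEAST k::nat. real k > 2 / \<nu> * \<mu> * (1 + sqrt 2)) \<longrightarrow>
                 (\<integral>\<^sup>+ \<omega>. ennreal ((norm (fbf_x f GH \<nu> x0 xm1 (\<lambda>k. \<xi> k \<omega>) n - xbar))\<^sup>2) \<partial>M)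
                   \<le> ennreal (C * ln (real n + 1) / (real n + 1)))"
proof -
  obtain xbar where xbar: "- gh xbar \<in> subdiff f xbar" using zer_nonempty by auto
  have composite: "composite_minimization f \<nu> h gh \<mu> xbar"
  proof unfold_locales
    show "\<exists>x u. u \<in> subdiff f x" using xbar by blast
  qed (fact f_Gamma0 nu_pos f_strong h_convex mu_pos xbar | rule h_grad gh_lip)+
  interpret stochastic_reflected_fb f \<nu> h gh \<mu> xbar M GH \<xi> x0 xm1 c
  proof (rule stochastic_reflected_fb.intro[OF composite prob], rule stochastic_reflected_fb_axioms.intro)
  qed (fact xi_indep GH_meas | rule xi_rv xi_ident GH_unbiased var_bound)+
  obtain C where C: "\<And>n. n \<ge> 1 \<Longrightarrow> (\<integral>\<^sup>+ \<omega>. ennreal ((norm (X n \<omega> - xbar))\<^sup>2) \<partial>M)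
                                    \<le> ennreal (C * ln (real n + 1) / (real n + 1))"
    using mean_square_error_rate by blast
  show ?thesis
    using xbar_minimizes minimizer_unique C[unfolded X_def]
    by (intro exI[of _ xbar] conjI allI impI exI[of _ C]) auto
qed

end
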